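(* Let $(\Gamma,\psi)$ be an $H$-asymptotic couple with asymptotic integration. Suppose $S\subseteq\Gamma$ is a nonempty convex set without a greatest element such that either $S\subseteq(\Gamma^{>})'$ or $S\subseteq(\Gamma^{<})'$, and $S$ has the derived yardstick property. Then $\int S:=\{\int\sigma:\sigma\in S\}\subseteq\Gamma$ is nonempty, convex, has no greatest element, and has the yardstick property.
   Context: An asymptotic couple is a pair $(\Gamma,\psi)$ with $\Gamma$ an ordered abelian group and $\psi:\Gamma\setminus\{0\}\to\Gamma$ such that for all nonzero $\alpha,\beta$: $\alpha+\beta\ne0\Rightarrow\psi(\alpha+\beta)\ge\min(\psi(\alpha),\psi(\beta))$; $\psi(k\alpha)=\psi(\alpha)$ for $k\in\mathbb{Z}\setminus\{0\}$; $\alpha>0\Rightarrow\alpha+\psi(\alpha)>\psi(\beta)$. It is $H$-asymptotic (of $H$-type) if $0<\alpha\le\beta\Rightarrow\psi(\alpha)\ge\psi(\beta)$. Write $\gamma'=\gamma+\psi(\gamma)$ for $\gamma\ne0$, $(\Gamma^{>})'=\{\gamma':\gamma>0\}$, $(\Gamma^{<})'=\{\gamma':\gamma<0\}$. Asymptotic integration: every $\alpha\in\Gamma$ equals $\gamma'$ for some $\gamma\ne0$; then such $\gamma$ is unique and is denoted $\int\alpha$. Define $s(\alpha)=\psi(\int\alpha)$, and the contraction $\chi(\alpha)=\int\psi(\alpha)$ for $\alpha\ne0$, $\chi(0)=0$. A nonempty convex $S\subseteq\Gamma$ without greatest element has the yardstick property if there is $\beta\in S$ with $\gamma-\chi(\gamma)\in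 S$ for all $\gamma\in S$, $\gamma>\beta$. A nonempty convex $S\subseteq\Gamma$ without greatest element with $S\subseteq(\Gamma^{>})'$ or $S\subseteq(\Gamma^{<})'$ has the derived yardstick property if there is $\beta\in S$ such that $\gamma-\int s(\gamma)\in S$ and $\gamma-\int s(\gamma)>\beta$ for every $\gamma\in S$ with $\gamma>\beta$. *)

theory Defs
  imports Main
begin

definition zmult :: "int \<Rightarrow> 'a::ab_group_add \<Rightarrow> 'a" where
  "zmult k a = (if k \<ge> 0 then (((+) a) ^^ nat k) 0 else - ((((+) a) ^^ nat (-k)) 0))"

text \<open>psi is a total function; only its values on nonzero elements matter.\<close>
definition asymptotic_couple :: "('a::linordered_ab_group_add \<Rightarrow> 'a) \<Rightarrow> bool" where
  "asymptotic_couple psi \<longleftrightarrow>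
     (\<forall>\<alpha> \<beta>. \<alpha> \<noteq> 0 \<and> \<beta> \<noteq> 0 \<and> \<alpha> + \<beta> \<noteq> 0 \<longrightarrow> psi (\<alpha> + \<beta>) \<ge> min (psi \<alpha>) (psi \<beta>)) \<and>
     (\<forall>\<alpha> k. \<alpha> \<noteq> 0 \<and> k \<noteq> 0 \<longrightarrow> psi (zmult k \<alpha>) = psi \<alpha>) \<and>
     (\<forall>\<alpha> \<beta>. \<alpha> > 0 \<and> \<beta> \<noteq> 0 \<longrightarrow> \<alpha> + psi \<alpha> > psi \<beta>)"

definition H_asymptotic :: "('a::linordered_ab_group_add \<Rightarrow> 'a) \<Rightarrow> bool" where
  "H_asymptotic psi \<longleftrightarrow> asymptotic_couple psi \<and>
     (\<forall>\<alpha> \<beta>. 0 < \<alpha> \<and> \<alpha> \<le> \<beta> \<longrightarrow> psi \<alpha> \<ge> psi \<beta>)"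

definition prime_ac :: "('a::linordered_ab_group_add \<Rightarrow> 'a) \<Rightarrow> 'a \<Rightarrow> 'a" where
  "prime_ac psi \<gamma> = \<gamma> + psi \<gamma>"

definition pos_primes :: "('a::linordered_ab_group_add \<Rightarrow> 'a) \<Rightarrow> 'a set" where
  "pos_primes psi = {prime_ac psi \<gamma> | \<gamma>. \<gamma> > 0}"

definition neg_primes :: "('a::linordered_ab_group_add \<Rightarrow> 'a) \<Rightarrow> 'a set" where
  "neg_primes psi = {prime_ac psi \<gamma> | \<gamma>. \<gamma> < 0}"

definition has_asymptotic_integration :: "('a::linordered_ab_group_add \<Rightarrow> 'a) \<Rightarrow> bool" where
  "has_asymptotic_integration psi \<longleftrightarrow> (\<forall>\<alpha>. \<exists>\<gamma>. \<gamma> \<noteq> 0 \<and> prime_ac psi \<gamma> = \<alpha>)"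

definition ac_integral :: "('a::linordered_ab_group_add \<Rightarrow> 'a) \<Rightarrow> 'a \<Rightarrow> 'a" where
  "ac_integral psi \<alpha> = (THE \<gamma>. \<gamma> \<noteq> 0 \<and> prime_ac psi \<gamma> = \<alpha>)"

definition ac_s :: "('a::linordered_ab_group_add \<Rightarrow> 'a) \<Rightarrow> 'a \<Rightarrow> 'a" where
  "ac_s psi \<alpha> = psi (ac_integral psi \<alpha>)"

definition ac_chi :: "('a::linordered_ab_group_add \<Rightarrow> 'a) \<Rightarrow> 'a \<Rightarrow> 'a" where
  "ac_chi psi \<alpha> = (if \<alpha> = 0 then 0 else ac_integral psi (psi \<alpha>))"

definition convex_set :: "'a::linorder set \<Rightarrow> bool" where
  "convex_set S \<longleftrightarrow> (\<forall>x y z. x \<in> S \<and> z \<in> S \<and> x \<le> y \<and> y \<le> z \<longrightarrow> y \<in> S)"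

definition no_greatest :: "'a::linorder set \<Rightarrow> bool" where
  "no_greatest S \<longleftrightarrow> (\<forall>x\<in>S. \<exists>y\<in>S. x < y)"

definition yardstick :: "('a::linordered_ab_group_add \<Rightarrow> 'a) \<Rightarrow> 'a set \<Rightarrow> bool" where
  "yardstick psi S \<longleftrightarrow> S \<noteq> {} \<and> convex_set S \<and> no_greatest S \<and>
     (\<exists>\<beta>\<in>S. \<forall>\<gamma>\<in>S. \<gamma> > \<beta> \<longrightarrow> \<gamma> - ac_chi psi \<gamma> \<in> S)"

definition derived_yardstick :: "('a::linordered_ab_group_add \<Rightarrow> 'a) \<Rightarrow> 'a set \<Rightarrow> bool" where
  "derived_yardstick psi S \<longleftrightarrow> S \<noteq> {} \<and> convex_set S \<and> no_greatest S \<and>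
     (S \<subseteq> pos_primes psi \<or> S \<subseteq> neg_primes psi) \<and>
     (\<exists>\<beta>\<in>S. \<forall>\<gamma>\<in>S. \<gamma> > \<beta> \<longrightarrow>
        \<gamma> - ac_integral psi (ac_s psi \<gamma>) \<in> S \<and> \<gamma> - ac_integral psi (ac_s psi \<gamma>) > \<beta>)"

end

theory Submission
  imports Defs
begin

text \<open>
  The map \<open>\<gamma> \<mapsto> \<gamma>'\<close> is strictly increasing on nonzero elements, so \<open>\<integral>\<close> is strictly increasing,
  maps \<open>(\<Gamma>\<^sup>>)'\<close> into \<open>\<Gamma>\<^sup>>\<close> and \<open>(\<Gamma>\<^sup><)'\<close> into \<open>\<Gamma>\<^sup><\<close>, and an interval of primes pulls back
  to an interval. For the yardstick property write \<open>\<sigma> = \<gamma>'\<close> and \<open>\<delta> = \<chi>(\<gamma>) = \<integral>\<psi>(\<gamma>)\<close>, so that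
  \<open>\<sigma> - \<integral>s(\<sigma>) = \<sigma> - \<delta>\<close>. From \<open>\<delta> + \<psi>(\<delta>) = \<psi>(\<gamma>)\<close> one gets \<open>\<delta> < 0\<close>, and then
  \<open>\<psi>(\<gamma> - \<delta>) \<le> \<psi>(\<gamma>)\<close>: for \<open>\<gamma> > 0\<close> by \<open>H\<close>-type, for \<open>\<gamma> < 0\<close> because \<open>\<psi>(\<delta>) > \<psi>(\<gamma>)\<close>
  forces \<open>\<psi>(\<gamma> - \<delta>) = \<psi>(\<gamma>)\<close>. Hence
  \<open>\<sigma> \<le> (\<gamma> - \<delta>)' \<le> \<sigma> - \<delta>\<close>; since \<open>\<sigma> - \<delta> \<in> S\<close> by the derived yardstick property, convexity
  gives \<open>(\<gamma> - \<delta>)' \<in> S\<close>, i.e. \<open>\<gamma> - \<chi>(\<gamma>) \<in> \<integral>S\<close>.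
\<close>

lemma ac_psi_add_ge_min:
  assumes "asymptotic_couple psi" "a \<noteq> 0" "b \<noteq> 0" "a + b \<noteq> 0"
  shows "min (psi a) (psi b) \<le> psi (a + b)"
  using assms unfolding asymptotic_couple_def by blast

lemma ac_psi_less_add_psi:
  assumes "asymptotic_couple psi" "a > 0" "b \<noteq> 0"
  shows "psi b < a + psi a"
  using assms unfolding asymptotic_couple_def by blast

lemma ac_psi_uminus:
  assumes "asymptotic_couple psi" "a \<noteq> 0"
  shows "psi (- a) = psi a"
proof -
  have "psi (zmult (-1) a) = psi a"
    using assms unfolding asymptotic_couple_def by (metis zero_neq_neg_one)
  then show ?thesis by (simp add: zmult_def)
qed

lemma ac_psi_add_eq_left:
  assumes ac: "asymptotic_couple psi" and "a \<noteq> 0" "b \<noteq> 0" and less: "psi a < psi b"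
  shows "a + b \<noteq> 0" and "psi (a + b) = psi a"
proof -
  show ab: "a + b \<noteq> 0"
    using less ac_psi_uminus[OF ac \<open>a \<noteq> 0\<close>] by (metis add_eq_0_iff less_irrefl)
  have "min (psi (a + b)) (psi (- b)) \<le> psi a"
    using ac_psi_add_ge_min[OF ac ab, of "- b"] \<open>a \<noteq> 0\<close> \<open>b \<noteq> 0\<close> by simp
  moreover have "min (psi a) (psi b) \<le> psi (a + b)"
    using ac_psi_add_ge_min[OF ac \<open>a \<noteq> 0\<close> \<open>b \<noteq> 0\<close> ab] .
  ultimately show "psi (a + b) = psi a"
    using less ac_psi_uminus[OF ac \<open>b \<noteq> 0\<close>] by (auto simp: min_def split: if_splits)
qed

lemma prime_ac_strict_mono:
  assumes ac: "asymptotic_couple psi" and "a \<noteq> 0" "b \<noteq> 0" "a < b"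
  shows "prime_ac psi a < prime_ac psi b"
proof (cases "psi a \<le> psi b")
  case True
  then show ?thesis using \<open>a < b\<close> unfolding prime_ac_def by (simp add: add_less_le_mono)
next
  case False
  have "b - a > 0" using \<open>a < b\<close> by simp
  have "min (psi a) (psi (b - a)) \<le> psi b"
    using ac_psi_add_ge_min[OF ac \<open>a \<noteq> 0\<close>, of "b - a"] assms by simp
  then have "psi (b - a) \<le> psi b" using False by (simp add: min_def split: if_splits)
  moreover have "psi a < (b - a) + psi (b - a)"
    using ac_psi_less_add_psi[OF ac \<open>b - a > 0\<close> \<open>a \<noteq> 0\<close>] .
  ultimately have "psi a < (b - a) + psi b"
    by (meson add_le_cancel_left less_le_trans)
  then show ?thesis unfolding prime_ac_def by (simp add: algebra_simps)
qed

lemma prime_ac_mono: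
  assumes "asymptotic_couple psi" "a \<noteq> 0" "b \<noteq> 0" "a \<le> b"
  shows "prime_ac psi a \<le> prime_ac psi b"
  using prime_ac_strict_mono[of psi a b] assms by (cases "a = b") (auto simp: less_le)

lemma prime_ac_less_iff:
  assumes "asymptotic_couple psi" "a \<noteq> 0" "b \<noteq> 0"
  shows "prime_ac psi a < prime_ac psi b \<longleftrightarrow> a < b"
  using prime_ac_strict_mono[of psi a b] prime_ac_mono[of psi b a] assms
  by (meson leD linorder_le_less_linear)

lemma prime_ac_inj:
  assumes "asymptotic_couple psi" "a \<noteq> 0" "b \<noteq> 0" "prime_ac psi a = prime_ac psi b"
  shows "a = b"
  using prime_ac_less_iff[OF assms(1-3)] prime_ac_less_iff[OF assms(1) assms(3,2)] assms(4)
  by (metis less_irrefl linorder_neqE)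

lemma ac_integral_eqI:
  assumes "asymptotic_couple psi" "g \<noteq> 0" "prime_ac psi g = x"
  shows "ac_integral psi x = g"
  unfolding ac_integral_def
proof (rule the_equality)
  show "g \<noteq> 0 \<and> prime_ac psi g = x" using assms(2,3) ..
  show "h = g" if "h \<noteq> 0 \<and> prime_ac psi h = x" for h
    using prime_ac_inj[OF assms(1), of h g] that assms(2,3) by metis
qed

lemma
  assumes "asymptotic_couple psi" "has_asymptotic_integration psi"
  shows ac_integral_nonzero: "ac_integral psi x \<noteq> 0"
    and prime_ac_ac_integral: "prime_ac psi (ac_integral psi x) = x"
proof -
  obtain g where "g \<noteq> 0" "prime_ac psi g = x"
    using assms(2) unfolding has_asymptotic_integration_def by blast
  with ac_integral_eqI[OF assms(1)] show "ac_integral psi x \<noteq> 0" "prime_ac psi (ac_integral psi x) = x"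
    by auto
qed

lemma ac_integral_strict_mono:
  assumes "asymptotic_couple psi" "has_asymptotic_integration psi"
  shows "strict_mono (ac_integral psi)"
  using prime_ac_less_iff[OF assms(1) ac_integral_nonzero[OF assms] ac_integral_nonzero[OF assms]]
  by (auto intro!: strict_monoI simp: prime_ac_ac_integral[OF assms])

lemma ac_integral_pos:
  assumes "asymptotic_couple psi" "x \<in> pos_primes psi"
  shows "ac_integral psi x > 0"
  using assms ac_integral_eqI[OF assms(1)] unfolding pos_primes_def by force

lemma ac_integral_neg:
  assumes "asymptotic_couple psi" "x \<in> neg_primes psi"
  shows "ac_integral psi x < 0"
  using assms ac_integral_eqI[OF assms(1)] unfolding neg_primes_def by force

lemma mem_image_ac_integral_iff:
  assumes "asymptotic_couple psi" "has_asymptotic_integration psi" "g \<noteq> 0"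
  shows "g \<in> ac_integral psi ` S \<longleftrightarrow> prime_ac psi g \<in> S"
  using prime_ac_ac_integral[OF assms(1,2)] ac_integral_eqI[OF assms(1,3)] by force

lemma no_greatest_image_strict_mono:
  assumes "strict_mono f" "no_greatest S"
  shows "no_greatest (f ` S)"
  using assms unfolding no_greatest_def strict_mono_def by blast

lemma convex_set_image_ac_integral:
  assumes ac: "asymptotic_couple psi" and ai: "has_asymptotic_integration psi"
    and "convex_set S" and primes: "S \<subseteq> pos_primes psi \<or> S \<subseteq> neg_primes psi"
  shows "convex_set (ac_integral psi ` S)"
  unfolding convex_set_def
proof (intro allI impI)
  fix x g z assume "x \<in> ac_integral psi ` S \<and> z \<in> ac_integral psi ` S \<and> x \<le> g \<and> g \<le> z"
  then obtain a c where "a \<in> S" "c \<in> S" "x = ac_integral psi a" "z = ac_integral psi c"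
    and "x \<le> g" "g \<le> z" by blast
  moreover have "g \<noteq> 0"
    using primes calculation ac_integral_pos[OF ac] ac_integral_neg[OF ac] by fastforce
  ultimately have "a \<le> prime_ac psi g" "prime_ac psi g \<le> c"
    using prime_ac_mono[OF ac] ac_integral_nonzero[OF ac ai] prime_ac_ac_integral[OF ac ai] by metis+
  then show "g \<in> ac_integral psi ` S"
    using \<open>convex_set S\<close> \<open>a \<in> S\<close> \<open>c \<in> S\<close> mem_image_ac_integral_iff[OF ac ai \<open>g \<noteq> 0\<close>]
    unfolding convex_set_def by blast
qed

lemma ac_chi_neg:
  assumes H: "H_asymptotic psi" and ai: "has_asymptotic_integration psi" and "g \<noteq> 0"
  shows "ac_chi psi g < 0"
proof (rule ccontr)
  have ac: "asymptotic_couple psi" using H unfolding H_asymptotic_def by blast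
  define d where "d = ac_chi psi g"
  have "d \<noteq> 0" and d_prime: "d + psi d = psi g"
    using ac_integral_nonzero[OF ac ai] prime_ac_ac_integral[OF ac ai] \<open>g \<noteq> 0\<close>
    unfolding d_def ac_chi_def prime_ac_def by auto
  assume "\<not> ac_chi psi g < 0"
  then have "d > 0" using \<open>d \<noteq> 0\<close> unfolding d_def by simp
  then have "psi g < d + psi d"
    using ac_psi_less_add_psi[OF ac _ \<open>g \<noteq> 0\<close>] by blast
  then show False using d_prime by simp
qed

lemma psi_diff_ac_chi:
  assumes H: "H_asymptotic psi" and ai: "has_asymptotic_integration psi" and "g \<noteq> 0"
  shows "g - ac_chi psi g \<noteq> 0" and "psi (g - ac_chi psi g) \<le> psi g"
proof -
  have ac: "asymptotic_couple psi" using H unfolding H_asymptotic_def by blast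
  define d where "d = ac_chi psi g"
  have "d < 0" using ac_chi_neg[OF assms] unfolding d_def .
  have d_prime: "d + psi d = psi g"
    using prime_ac_ac_integral[OF ac ai] \<open>g \<noteq> 0\<close> unfolding d_def ac_chi_def prime_ac_def by auto
  have "g - d \<noteq> 0 \<and> psi (g - d) \<le> psi g"
  proof (cases "g > 0")
    case True
    then show ?thesis using H \<open>d < 0\<close> unfolding H_asymptotic_def by auto
  next
    case False
    have "psi g < psi (- d)"
      using d_prime \<open>d < 0\<close> ac_psi_uminus[OF ac, of d] by (metis add_less_same_cancel2 less_irrefl)
    then show ?thesis
      using ac_psi_add_eq_left[OF ac \<open>g \<noteq> 0\<close>, of "- d"] \<open>d < 0\<close> by simp
  qed
  then show "g - ac_chi psi g \<noteq> 0" "psi (g - ac_chi psi g) \<le> psi g"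
    unfolding d_def by auto
qed

lemma prime_ac_diff_ac_chi_between:
  assumes H: "H_asymptotic psi" and ai: "has_asymptotic_integration psi" and "g \<noteq> 0"
  shows "prime_ac psi g \<le> prime_ac psi (g - ac_chi psi g)"
    and "prime_ac psi (g - ac_chi psi g) \<le> prime_ac psi g - ac_chi psi g"
proof -
  have ac: "asymptotic_couple psi" using H unfolding H_asymptotic_def by blast
  show "prime_ac psi g \<le> prime_ac psi (g - ac_chi psi g)"
    using prime_ac_mono[OF ac \<open>g \<noteq> 0\<close> psi_diff_ac_chi(1)[OF assms]] ac_chi_neg[OF assms] by simp
  show "prime_ac psi (g - ac_chi psi g) \<le> prime_ac psi g - ac_chi psi g"
    using psi_diff_ac_chi(2)[OF assms] unfolding prime_ac_def by (simp add: algebra_simps)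
qed

lemma yardstick_image_ac_integral:
  assumes H: "H_asymptotic psi" and ai: "has_asymptotic_integration psi"
    and dy: "derived_yardstick psi S"
  shows "yardstick psi (ac_integral psi ` S)"
proof -
  have ac: "asymptotic_couple psi" using H unfolding H_asymptotic_def by blast
  have mono: "strict_mono (ac_integral psi)" using ac_integral_strict_mono[OF ac ai] .
  obtain \<beta> where "\<beta> \<in> S"
    and \<beta>: "\<And>\<sigma>. \<sigma> \<in> S \<Longrightarrow> \<sigma> > \<beta> \<Longrightarrow> \<sigma> - ac_integral psi (ac_s psi \<sigma>) \<in> S"
    using dy unfolding derived_yardstick_def by blast
  have "g - ac_chi psi g \<in> ac_integral psi ` S"
    if g_mem: "g \<in> ac_integral psi ` S" and g_gt: "g > ac_integral psi \<beta>" for g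
  proof -
    obtain \<sigma> where "\<sigma> \<in> S" and g: "g = ac_integral psi \<sigma>" using g_mem by blast
    have "g \<noteq> 0" and \<sigma>: "\<sigma> = prime_ac psi g"
      using g ac_integral_nonzero[OF ac ai] prime_ac_ac_integral[OF ac ai] by auto
    have "\<sigma> > \<beta>" using g_gt g mono by (simp add: strict_mono_less)
    then have "\<sigma> - ac_chi psi g \<in> S"
      using \<beta>[OF \<open>\<sigma> \<in> S\<close>] g \<open>g \<noteq> 0\<close> unfolding ac_s_def ac_chi_def by simp
    then have "prime_ac psi (g - ac_chi psi g) \<in> S"
      using dy \<open>\<sigma> \<in> S\<close> prime_ac_diff_ac_chi_between[OF H ai \<open>g \<noteq> 0\<close>] \<sigma>
      unfolding derived_yardstick_def convex_set_def by blast
    then show ?thesis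
      using mem_image_ac_integral_iff[OF ac ai psi_diff_ac_chi(1)[OF H ai \<open>g \<noteq> 0\<close>]] by blast
  qed
  then show ?thesis
    using dy \<open>\<beta> \<in> S\<close> convex_set_image_ac_integral[OF ac ai] no_greatest_image_strict_mono[OF mono]
    unfolding yardstick_def derived_yardstick_def by blast
qed

theorem proposition3p19:
  fixes psi :: "'a::linordered_ab_group_add \<Rightarrow> 'a" and S :: "'a set"
  assumes "H_asymptotic psi"
    and "has_asymptotic_integration psi"
    and "S \<noteq> {}" and "convex_set S" and "no_greatest S"
    and "S \<subseteq> pos_primes psi \<or> S \<subseteq> neg_primes psi"
    and "derived_yardstick psi S"
  shows "ac_integral psi ` S \<noteq> {} \<and> convex_set (ac_integral psi ` S) \<and>
         no_greatest (ac_integral psi ` S) \<and> yardstick psi (ac_integral psi ` S)"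
  using yardstick_image_ac_integral[OF assms(1,2,7)] by (simp add: yardstick_def)

end
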